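(* For every frame $\mathcal{F}=\langle S,R\rangle$, $\mathcal{F}\vDash \bullet q\land\Delta p\land\circ(\neg q\to p)\to\circ(\neg q\to\circ(\neg r\to p))$ (for distinct propositional variables $p,q,r$) if and only if $R$ is transitive.
   Context: Fix a nonempty set $\mathbf{P}$ of propositional variables (containing distinct $p,q,r$). $\mathcal{L}(\nabla,\bullet)$: $\phi::=p\mid\neg\phi\mid\phi\land\phi\mid\nabla\phi\mid\bullet\phi$; $\Delta\phi:=\neg\nabla\phi$, $\circ\phi:=\neg\bullet\phi$. A frame is $\langle S,R\rangle$ with $S\neq\emptyset$, $R\subseteq S\times S$; a model based on it adds $V:\mathbf{P}\to\mathcal{P}(S)$. Truth: $\mathcal{M},s\vDash\nabla\phi$ iff there are $t,u$ with $sRt$, $sRu$, $\mathcal{M},t\vDash\phi$, $\mathcal{M},u\nvDash\phi$; $\mathcal{M},s\vDash\bullet\phi$ iff $\mathcal{M},s\vDash\phi$ and there is $t$ with $sRt$, $\mathcal{M},t\nvDash\phi$. $\mathcal{F}\vDash\phi$ means $\phi$ is true at every state of every model based on $\mathcal{F}$. *)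

theory Defs
  imports Main
begin

datatype 'p form =
    Atom 'p
  | Neg "'p form"
  | Conj "'p form" "'p form"
  | Nabla "'p form"
  | Bullet "'p form"

definition Delta :: "'p form \<Rightarrow> 'p form" where
  "Delta \<phi> = Neg (Nabla \<phi>)"

definition Circ :: "'p form \<Rightarrow> 'p form" where
  "Circ \<phi> = Neg (Bullet \<phi>)"

definition Imp :: "'p form \<Rightarrow> 'p form \<Rightarrow> 'p form" where
  "Imp \<phi> \<psi> = Neg (Conj \<phi> (Neg \<psi>))"

definition is_frame :: "'s set \<Rightarrow> ('s \<times> 's) set \<Rightarrow> bool" where
  "is_frame S R \<longleftrightarrow> S \<noteq> {} \<and> R \<subseteq> S \<times> S"

fun sat :: "('s \<times> 's) set \<Rightarrow> ('p \<Rightarrow> 's set) \<Rightarrow> 's \<Rightarrow> 'p form \<Rightarrow> bool" where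
  "sat R V s (Atom p) = (s \<in> V p)"
| "sat R V s (Neg \<phi>) = (\<not> sat R V s \<phi>)"
| "sat R V s (Conj \<phi> \<psi>) = (sat R V s \<phi> \<and> sat R V s \<psi>)"
| "sat R V s (Nabla \<phi>) =
     (\<exists>t u. (s, t) \<in> R \<and> (s, u) \<in> R \<and> sat R V t \<phi> \<and> \<not> sat R V u \<phi>)"
| "sat R V s (Bullet \<phi>) = (sat R V s \<phi> \<and> (\<exists>t. (s, t) \<in> R \<and> \<not> sat R V t \<phi>))"

definition frame_valid :: "'s set \<Rightarrow> ('s \<times> 's) set \<Rightarrow> 'p form \<Rightarrow> bool" where
  "frame_valid S R \<phi> \<longleftrightarrow>
     (\<forall>V :: 'p \<Rightarrow> 's set. (\<forall>x. V x \<subseteq> S) \<longrightarrow> (\<forall>s\<in>S. sat R V s \<phi>))"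

end

theory Submission
  imports Defs
begin

text \<open>If the antecedent holds at s, then s has a successor refuting q, which must satisfy p;
  since p is non-contingent at s, every successor satisfies p. Under transitivity every
  two-step successor is then a successor, so it satisfies p and hence the consequent holds.
  Conversely, if s R u R w but not s R w, make q true only at s, p true exactly at the
  successors of s and r nowhere: the antecedent holds at s, while at u the formula
  \<not>r \<rightarrow> p holds but is accidentally true, because it fails at w.\<close>

definition transitivity_formula :: "'p form \<Rightarrow> 'p form \<Rightarrow> 'p form \<Rightarrow> 'p form" where
  "transitivity_formula \<phi> \<psi> \<chi> =
     Imp (Conj (Conj (Bullet \<psi>) (Delta \<phi>)) (Circ (Imp (Neg \<psi>) \<phi>)))
         (Circ (Imp (Neg \<psi>) (Circ (Imp (Neg \<chi>) \<phi>))))"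

lemma sat_Imp [simp]: "sat R V s (Imp \<phi> \<psi>) \<longleftrightarrow> (sat R V s \<phi> \<longrightarrow> sat R V s \<psi>)"
  by (simp add: Imp_def)

lemma sat_Delta [simp]:
  "sat R V s (Delta \<phi>) \<longleftrightarrow>
     (\<forall>t. (s, t) \<in> R \<longrightarrow> sat R V t \<phi>) \<or> (\<forall>t. (s, t) \<in> R \<longrightarrow> \<not> sat R V t \<phi>)"
  by (auto simp: Delta_def)

lemma sat_Circ [simp]:
  "sat R V s (Circ \<phi>) \<longleftrightarrow> (sat R V s \<phi> \<longrightarrow> (\<forall>t. (s, t) \<in> R \<longrightarrow> sat R V t \<phi>))"
  by (auto simp: Circ_def)

lemma successors_sat_if_antecedent:
  assumes "sat R V s (Conj (Conj (Bullet \<psi>) (Delta \<phi>)) (Circ (Imp (Neg \<psi>) \<phi>)))"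
    and "(s, t) \<in> R"
  shows "sat R V t \<phi>"
proof -
  from assms(1) obtain u where "(s, u) \<in> R" and "\<not> sat R V u \<psi>"
    by auto
  with assms show ?thesis
    by auto
qed

lemma sat_transitivity_formula_if_trans:
  assumes "trans R"
  shows "sat R V s (transitivity_formula \<phi> \<psi> \<chi>)"
  unfolding transitivity_formula_def sat_Imp
proof
  assume antecedent: "sat R V s (Conj (Conj (Bullet \<psi>) (Delta \<phi>)) (Circ (Imp (Neg \<psi>) \<phi>)))"
  have "sat R V u (Circ (Imp (Neg \<chi>) \<phi>))" if "(s, u) \<in> R" for u
    using successors_sat_if_antecedent[OF antecedent] transD[OF assms that] by simp
  then show "sat R V s (Circ (Imp (Neg \<psi>) (Circ (Imp (Neg \<chi>) \<phi>))))"
    by simp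
qed

lemma trans_if_frame_valid_transitivity_formula:
  assumes "is_frame S R" and "p \<noteq> q" and "p \<noteq> r" and "q \<noteq> r"
    and valid: "frame_valid S R (transitivity_formula (Atom p) (Atom q) (Atom r))"
  shows "trans R"
proof (rule transI, rule ccontr)
  fix s u w
  assume su: "(s, u) \<in> R" and uw: "(u, w) \<in> R" and sw: "(s, w) \<notin> R"
  define V where "V x = (if x = p then R `` {s} else if x = q then {s} else {})" for x
  have "s \<in> S" and "\<forall>x. V x \<subseteq> S"
    using \<open>is_frame S R\<close> su by (auto simp: is_frame_def V_def)
  with valid have sat_s: "sat R V s (transitivity_formula (Atom p) (Atom q) (Atom r))"
    by (auto simp: frame_valid_def)
  have V: "V p = R `` {s}" "V q = {s}" "V r = {}"
    using assms(2-4) by (auto simp: V_def)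
  have "u \<noteq> s"
    using uw sw by auto
  with su have "sat R V s (Conj (Conj (Bullet (Atom q)) (Delta (Atom p)))
                                (Circ (Imp (Neg (Atom q)) (Atom p))))"
    by (auto simp: V)
  moreover have "\<not> sat R V u (Circ (Imp (Neg (Atom r)) (Atom p)))"
    using su uw sw by (auto simp: V)
  ultimately show False
    using sat_s su \<open>u \<noteq> s\<close> by (simp add: transitivity_formula_def V) blast
qed

theorem proposition5:
  fixes S :: "'s set" and R :: "('s \<times> 's) set" and p q r :: 'p
  assumes "is_frame S R"
    and "p \<noteq> q" and "p \<noteq> r" and "q \<noteq> r"
  shows "frame_valid S R
           (Imp (Conj (Conj (Bullet (Atom q)) (Delta (Atom p)))
                      (Circ (Imp (Neg (Atom q)) (Atom p))))
                (Circ (Imp (Neg (Atom q)) (Circ (Imp (Neg (Atom r)) (Atom p))))))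
         \<longleftrightarrow> trans R"
proof -
  have "frame_valid S R (transitivity_formula (Atom p) (Atom q) (Atom r)) \<longleftrightarrow> trans R"
    using trans_if_frame_valid_transitivity_formula[OF assms]
      sat_transitivity_formula_if_trans
    by (auto simp: frame_valid_def)
  then show ?thesis
    unfolding transitivity_formula_def .
qed

end
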